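(* Let $\mathcal{H}$ be a Hilbert space, $K(\mathcal{H})$ the $C^*$-algebra of compact operators on $\mathcal{H}$, and $\mathcal{E}$ a Hilbert $K(\mathcal{H})$-module. Let $x, y \in \mathcal{E}$ be such that $\langle x, x\rangle$ is idempotent. Then the following are equivalent: (i) $x \parallel y$; (ii) there exists $\lambda\in\mathbb{T}$ such that $$x \perp_B \big(\|y\|\langle x,x\rangle x + \lambda \|x\|\langle y,x\rangle x\big) \quad\text{and}\quad y \perp_B \big(\|x\|\langle y,y\rangle y + \lambda\|y\|\langle y,x\rangle y\big).$$
   Context: A (left) Hilbert $K(\mathcal{H})$-module is a left $K(\mathcal{H})$-module $\mathcal{E}$ with a $K(\mathcal{H})$-valued inner product $\langle\cdot,\cdot\rangle$, linear in the first variable and conjugate linear in the second, satisfying $\langle x,x\rangle\ge 0$ with equality iff $x=0$, $\langle ax,y\rangle = a\langle x,y\rangle$ and $\langle x,y\rangle^*=\langle y,x\rangle$, and complete for the norm $\|x\|=\|\langle x,x\rangle\|^{1/2}$. $\mathbb{T}=\{\alpha\in\mathbb{C}:|\alpha|=1\}$. For elements $x,y$ of a normed space, $x\parallel y$ (norm-parallel) means $\|x+\lambda y\| = \|x\|+\|y\|$ for some $\lambda\in\mathbb{T}$, and $x\perp_B y$ (Birkhoff–James orthogonality) means $\|x\|\le\|x+\alpha y\|$ for all $\alpha\in\mathbb{C}$. *)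

theory Defs
  imports Complex_Main
begin

text \<open>A complex Hilbert space is modelled by a carrier type 'h (an additive group)
  together with an explicit complex scalar multiplication sm and inner product ip
  (linear in the first variable).\<close>

definition hnorm :: "('h \<Rightarrow> 'h \<Rightarrow> complex) \<Rightarrow> 'h \<Rightarrow> real" where
  "hnorm ip u = sqrt (Re (ip u u))"

definition hilbert_space ::
  "(complex \<Rightarrow> 'h::ab_group_add \<Rightarrow> 'h) \<Rightarrow> ('h \<Rightarrow> 'h \<Rightarrow> complex) \<Rightarrow> bool" where
  "hilbert_space sm ip \<longleftrightarrow>
     (\<forall>u. sm 1 u = u) \<and>
     (\<forall>a b u. sm a (sm b u) = sm (a * b) u) \<and>
     (\<forall>a u v. sm a (u + v) = sm a u + sm a v) \<and>
     (\<forall>a b u. sm (a + b) u = sm a u + sm b u) \<and>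
     (\<forall>u v w. ip (u + v) w = ip u w + ip v w) \<and>
     (\<forall>a u v. ip (sm a u) v = a * ip u v) \<and>
     (\<forall>u v. ip v u = cnj (ip u v)) \<and>
     (\<forall>u. Im (ip u u) = 0 \<and> Re (ip u u) \<ge> 0) \<and>
     (\<forall>u. ip u u = 0 \<longrightarrow> u = 0) \<and>
     (\<forall>X::nat \<Rightarrow> _. (\<forall>e>0. \<exists>N. \<forall>m\<ge>N. \<forall>n\<ge>N. hnorm ip (X m - X n) < e) \<longrightarrow>
          (\<exists>L. (\<lambda>n. hnorm ip (X n - L)) \<longlonglongrightarrow> 0))"

definition compact_op ::
  "(complex \<Rightarrow> 'h::ab_group_add \<Rightarrow> 'h) \<Rightarrow> ('h \<Rightarrow> 'h \<Rightarrow> complex) \<Rightarrow> ('h \<Rightarrow> 'h) \<Rightarrow> bool" where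
  "compact_op sm ip T \<longleftrightarrow>
     (\<forall>u v. T (u + v) = T u + T v) \<and>
     (\<forall>c u. T (sm c u) = sm c (T u)) \<and>
     (\<forall>(X::nat \<Rightarrow> 'h) B. (\<forall>n. hnorm ip (X n) \<le> B) \<longrightarrow>
        (\<exists>(r::nat \<Rightarrow> nat) L. strict_mono r \<and> (\<lambda>n. hnorm ip (T (X (r n)) - L)) \<longlonglongrightarrow> 0))"

definition op_norm :: "('h \<Rightarrow> 'h \<Rightarrow> complex) \<Rightarrow> ('h \<Rightarrow> 'h) \<Rightarrow> real" where
  "op_norm ip T = Sup {hnorm ip (T u) | u. hnorm ip u \<le> 1}"

definition mnorm :: "('h \<Rightarrow> 'h \<Rightarrow> complex) \<Rightarrow> ('e \<Rightarrow> 'e \<Rightarrow> ('h \<Rightarrow> 'h)) \<Rightarrow> 'e \<Rightarrow> real" where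
  "mnorm ip eip x = sqrt (op_norm ip (eip x x))"

definition hilbert_KH_module ::
  "(complex \<Rightarrow> 'h::ab_group_add \<Rightarrow> 'h) \<Rightarrow> ('h \<Rightarrow> 'h \<Rightarrow> complex) \<Rightarrow>
   (complex \<Rightarrow> 'e::ab_group_add \<Rightarrow> 'e) \<Rightarrow> (('h \<Rightarrow> 'h) \<Rightarrow> 'e \<Rightarrow> 'e) \<Rightarrow>
   ('e \<Rightarrow> 'e \<Rightarrow> ('h \<Rightarrow> 'h)) \<Rightarrow> bool" where
  "hilbert_KH_module sm ip esm act eip \<longleftrightarrow>
     hilbert_space sm ip \<and>
     \<comment> \<open>complex vector space\<close>
     (\<forall>x. esm 1 x = x) \<and>
     (\<forall>a b x. esm a (esm b x) = esm (a * b) x) \<and>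
     (\<forall>a x y. esm a (x + y) = esm a x + esm a y) \<and>
     (\<forall>a b x. esm (a + b) x = esm a x + esm b x) \<and>
     \<comment> \<open>left K(H)-module (compatible with scalars)\<close>
     (\<forall>a. compact_op sm ip a \<longrightarrow>
        (\<forall>x y. act a (x + y) = act a x + act a y) \<and>
        (\<forall>c x. act a (esm c x) = esm c (act a x)) \<and>
        (\<forall>c x. act (\<lambda>u. sm c (a u)) x = esm c (act a x))) \<and>
     (\<forall>a b x. compact_op sm ip a \<and> compact_op sm ip b \<longrightarrow>
        act (\<lambda>u. a u + b u) x = act a x + act b x \<and>
        act (a \<circ> b) x = act a (act b x)) \<and>
     \<comment> \<open>K(H)-valued inner product\<close>
     (\<forall>x y. compact_op sm ip (eip x y)) \<and>
     (\<forall>x y z. eip (x + y) z = (\<lambda>u. eip x z u + eip y z u)) \<and>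
     (\<forall>c x y. eip (esm c x) y = (\<lambda>u. sm c (eip x y u))) \<and>
     (\<forall>a x y. compact_op sm ip a \<longrightarrow> eip (act a x) y = a \<circ> eip x y) \<and>
     (\<forall>x y u v. ip (eip x y u) v = ip u (eip y x v)) \<and>
     (\<forall>x u. Im (ip (eip x x u) u) = 0 \<and> Re (ip (eip x x u) u) \<ge> 0) \<and>
     (\<forall>x. eip x x = (\<lambda>u. 0) \<longleftrightarrow> x = 0) \<and>
     \<comment> \<open>completeness\<close>
     (\<forall>X::nat \<Rightarrow> _. (\<forall>e>0. \<exists>N. \<forall>m\<ge>N. \<forall>n\<ge>N. mnorm ip eip (X m - X n) < e) \<longrightarrow>
          (\<exists>L. (\<lambda>n. mnorm ip eip (X n - L)) \<longlonglongrightarrow> 0))"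

definition norm_parallel :: "('e::plus \<Rightarrow> real) \<Rightarrow> (complex \<Rightarrow> 'e \<Rightarrow> 'e) \<Rightarrow> 'e \<Rightarrow> 'e \<Rightarrow> bool" where
  "norm_parallel N sc x y \<longleftrightarrow> (\<exists>l. cmod l = 1 \<and> N (x + sc l y) = N x + N y)"

definition bj_orth :: "('e::plus \<Rightarrow> real) \<Rightarrow> (complex \<Rightarrow> 'e \<Rightarrow> 'e) \<Rightarrow> 'e \<Rightarrow> 'e \<Rightarrow> bool" where
  "bj_orth N sc x y \<longleftrightarrow> (\<forall>a. N x \<le> N (x + sc a y))"

end

theory Submission imports Defs begin

text \<open>
  For a unit vector \<open>\<xi> \<in> H\<close>, the vector state \<open>\<omega>\<^sub>\<xi>(a) = \<langle>a \<xi>, \<xi>\<rangle>\<close> turns the module inner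
  product into a positive Hermitian form \<open>\<omega>\<^sub>\<xi>\<langle>z, w\<rangle>\<close> on \<open>E\<close> with \<open>\<omega>\<^sub>\<xi>\<langle>z, z\<rangle> \<le> \<parallel>z\<parallel>\<^sup>2\<close>; since
  \<open>\<langle>z, z\<rangle>\<close> is a positive compact operator, equality holds for a unit eigenvector \<open>\<xi>\<close> of \<open>\<langle>z, z\<rangle>\<close>
  with eigenvalue \<open>\<parallel>z\<parallel>\<^sup>2\<close>.

  (i) \<open>\<Rightarrow>\<close> (ii): take such a \<open>\<xi>\<close> for \<open>z = x + \<lambda> y\<close>. The equality case of Cauchy--Schwarz for
  \<open>\<omega>\<^sub>\<xi>\<close> forces \<open>\<omega>\<^sub>\<xi>\<langle>x, x\<rangle> = \<parallel>x\<parallel>\<^sup>2\<close>, \<open>\<omega>\<^sub>\<xi>\<langle>y, y\<rangle> = \<parallel>y\<parallel>\<^sup>2\<close> and \<open>\<omega>\<^sub>\<xi>\<langle>x, y\<rangle> = \<lambda> \<parallel>x\<parallel> \<parallel>y\<parallel>\<close>. So \<open>\<xi>\<close> is an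
  eigenvector of \<open>\<langle>x, x\<rangle>\<close> and of \<open>\<langle>y, y\<rangle>\<close>, and \<open>\<omega>\<^sub>\<xi>\<close> annihilates the inner products of the two
  vectors of (ii), taken with \<open>-\<lambda>\<close>, with \<open>x\<close> and \<open>y\<close>; this gives both orthogonalities.

  (ii) \<open>\<Rightarrow>\<close> (i): if \<open>x \<noteq> 0\<close>, then \<open>p = \<langle>x, x\<rangle>\<close> is a nonzero projection and \<open>\<parallel>x\<parallel> = 1\<close>. For
  \<open>r > 0\<close> the orthogonality of \<open>x\<close> gives \<open>\<parallel>x - r w\<parallel> \<ge> 1\<close>; at a norming vector state \<open>\<xi>\<close> of
  \<open>x - r w\<close>, the vector \<open>\<eta> = p \<xi>\<close> satisfies \<open>\<parallel>\<eta>\<parallel>\<^sup>2 \<ge> 1 - O(r)\<close> and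
  \<open>\<parallel>y\<parallel> \<parallel>\<eta>\<parallel>\<^sup>2 + \<lambda> \<langle>\<langle>y, x\<rangle> \<eta>, \<eta>\<rangle> = O(\<surd>r)\<close>. Cauchy--Schwarz for \<open>\<omega>\<^sub>\<eta>\<close>, applied to
  \<open>x - \<lambda> y\<close> and \<open>x\<close>, then yields \<open>\<parallel>x - \<lambda> y\<parallel> \<ge> 1 + \<parallel>y\<parallel> - O(\<surd>r)\<close>, so \<open>x \<parallel> y\<close> with \<open>-\<lambda>\<close>.
\<close>

lemma complex_eq_of_real_if_cmod_le_Re:
  fixes z :: complex
  assumes "cmod z \<le> r" and "r \<le> Re z"
  shows "z = of_real r"
proof -
  have Re: "Re z = r" and "cmod z = r"
    using assms complex_Re_le_cmod[of z] by linarith+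
  then have "(Im z)\<^sup>2 = 0" using cmod_power2[of z] by simp
  then show ?thesis using Re by (simp add: complex_eq_iff)
qed

lemma power2_cmod_le_if_in_disc:
  fixes z :: complex
  assumes "cmod (z - of_real A) \<le> A"
  shows "(cmod z)\<^sup>2 \<le> 2 * A * Re z"
proof -
  have "(cmod (z - of_real A))\<^sup>2 \<le> A\<^sup>2"
    using assms norm_ge_zero by (rule power_mono)
  then show ?thesis
    by (simp add: cmod_power2 power2_diff algebra_simps)
qed

section \<open>Positive Hermitian forms\<close>

locale pos_herm_form =
  fixes scale :: "complex \<Rightarrow> 'a::ab_group_add \<Rightarrow> 'a" and form :: "'a \<Rightarrow> 'a \<Rightarrow> complex"
  assumes form_add_left: "form (u + v) w = form u w + form v w"
    and form_scale_left: "form (scale a u) v = a * form u v"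
    and form_cnj_swap: "form v u = cnj (form u v)"
    and Im_form_diag: "Im (form u u) = 0"
    and Re_form_diag_nonneg: "Re (form u u) \<ge> 0"
begin

lemma form_add_right: "form w (u + v) = form w u + form w v"
  by (metis form_add_left form_cnj_swap complex_cnj_add)

lemma form_scale_right: "form u (scale a v) = cnj a * form u v"
  by (metis form_scale_left form_cnj_swap complex_cnj_mult)

lemma form_zero_left: "form 0 v = 0"
  using form_add_left[of 0 0 v] by simp

lemma form_diff_left: "form (u - v) w = form u w - form v w"
  using form_add_left[of "u - v" v w] by (simp add: algebra_simps)

lemma form_diff_right: "form w (u - v) = form w u - form w v"
  using form_add_right[of w "u - v" v] by (simp add: algebra_simps)

lemma hnorm_zero [simp]: "hnorm form 0 = 0"
  by (simp add: hnorm_def form_zero_left)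

lemma hnorm_nonneg: "hnorm form u \<ge> 0"
  using Re_form_diag_nonneg by (simp add: hnorm_def)

lemma power2_hnorm: "(hnorm form u)\<^sup>2 = Re (form u u)"
  using Re_form_diag_nonneg by (simp add: hnorm_def)

lemma form_diag: "form u u = of_real ((hnorm form u)\<^sup>2)"
  using Im_form_diag by (simp add: power2_hnorm complex_eq_iff)

lemma Re_form_scale_diag: "Re (form (scale a u) (scale a u)) = (cmod a)\<^sup>2 * Re (form u u)"
proof -
  have "form (scale a u) (scale a u) = (a * cnj a) * form u u"
    by (simp add: form_scale_left form_scale_right mult.assoc)
  also have "\<dots> = of_real ((cmod a)\<^sup>2) * of_real (Re (form u u))"
    by (subst form_diag) (simp add: complex_norm_square power2_hnorm del: of_real_power)
  finally show ?thesis by simp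
qed

lemma Re_form_add_scale:
  "Re (form (u + scale a v) (u + scale a v)) =
     Re (form u u) + 2 * Re (cnj a * form u v) + (cmod a)\<^sup>2 * Re (form v v)"
proof -
  have "form (u + scale a v) (u + scale a v) =
      form u u + cnj a * form u v + a * form v u + form (scale a v) (scale a v)"
    by (simp add: form_add_left form_add_right form_scale_right[of u a v] form_scale_left[of a v u])
  moreover have "Re (a * form v u) = Re (cnj a * form u v)"
    by (simp add: form_cnj_swap[of v u])
  ultimately show ?thesis
    using Re_form_scale_diag[of a v] by (simp only: plus_complex.sel mult_2)
qed

lemma Re_form_diff:
  "Re (form (u - v) (u - v)) = Re (form u u) - 2 * Re (form u v) + Re (form v v)"
proof -
  have "Re (form v u) = Re (form u v)" using form_cnj_swap[of v u] by simp
  then show ?thesis by (simp add: form_diff_left form_diff_right)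
qed

lemma hnorm_scale: "hnorm form (scale a u) = cmod a * hnorm form u"
  by (simp add: hnorm_def Re_form_scale_diag real_sqrt_mult)

lemma cauchy_schwarz: "cmod (form u v) \<le> hnorm form u * hnorm form v"
proof (cases "form u v = 0")
  case True
  then show ?thesis by (simp add: hnorm_nonneg)
next
  case False
  define B where "B = cmod (form u v)"
  define A where "A = Re (form u u)"
  define C where "C = Re (form v v)"
  have B: "B > 0" using False by (simp add: B_def)
  have quadratic: "0 \<le> A - 2 * t * B + t\<^sup>2 * C" for t :: real
  proof -
    define a where "a = - complex_of_real (t / B) * form u v"
    have "cnj a * form u v = - complex_of_real (t / B) * of_real (B\<^sup>2)"
      by (simp add: a_def B_def complex_norm_square mult_ac del: of_real_power)
    then have "Re (cnj a * form u v) = - t * B"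
      using B by (simp add: power2_eq_square)
    moreover have "cmod a = \<bar>t\<bar>"
      using B by (simp add: a_def norm_mult norm_divide B_def)
    ultimately show ?thesis
      using Re_form_diag_nonneg[of "u + scale a v"] Re_form_add_scale[of u a v]
      by (simp add: A_def C_def)
  qed
  have C: "C \<ge> 0" using Re_form_diag_nonneg by (simp add: C_def)
  have "B\<^sup>2 \<le> A * C"
  proof (cases "C = 0")
    case True
    then show ?thesis using quadratic[of "(A + 1) / (2 * B)"] B by (simp add: field_simps)
  next
    case False
    then show ?thesis using quadratic[of "B / C"] C by (simp add: field_simps power2_eq_square)
  qed
  then have "B\<^sup>2 \<le> (hnorm form u * hnorm form v)\<^sup>2"
    by (simp add: A_def C_def power_mult_distrib power2_hnorm)
  then show ?thesis
    unfolding B_def by (rule power2_le_imp_le) (simp add: hnorm_nonneg)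
qed

lemma hnorm_triangle: "hnorm form (u + v) \<le> hnorm form u + hnorm form v"
proof -
  have "Re (form u v) \<le> hnorm form u * hnorm form v"
    using cauchy_schwarz complex_Re_le_cmod order_trans by blast
  then have "(hnorm form (u + v))\<^sup>2 \<le> (hnorm form u + hnorm form v)\<^sup>2"
    by (simp add: power2_hnorm form_add_left form_add_right power2_sum form_cnj_swap[of v u])
  then show ?thesis
    by (rule power2_le_imp_le) (simp add: hnorm_nonneg)
qed

lemma hnorm_diff_commute: "hnorm form (u - v) = hnorm form (v - u)"
  using Re_form_diff[of u v] Re_form_diff[of v u] form_cnj_swap[of v u] by (simp add: hnorm_def)

lemma hnorm_reverse_triangle: "\<bar>hnorm form u - hnorm form v\<bar> \<le> hnorm form (u - v)"
  using hnorm_triangle[of v "u - v"] hnorm_triangle[of u "v - u"] hnorm_diff_commute[of u v]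
  by simp

lemma hnorm_tendsto:
  assumes "(\<lambda>n. hnorm form (X n - L)) \<longlonglongrightarrow> 0"
  shows "(\<lambda>n. hnorm form (X n)) \<longlonglongrightarrow> hnorm form L"
proof (rule LIM_zero_cancel, rule tendsto_rabs_zero_cancel,
    rule real_tendsto_sandwich[where f = "\<lambda>n. 0"])
  show "\<forall>\<^sub>F n in sequentially. \<bar>hnorm form (X n) - hnorm form L\<bar> \<le> hnorm form (X n - L)"
    by (simp add: hnorm_reverse_triangle)
qed (use assms in auto)

end

section \<open>Compact operators on a Hilbert space\<close>

locale hilbert =
  fixes sm :: "complex \<Rightarrow> 'h::ab_group_add \<Rightarrow> 'h" and ip :: "'h \<Rightarrow> 'h \<Rightarrow> complex"
  assumes hilbert: "hilbert_space sm ip"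

sublocale hilbert \<subseteq> pos_herm_form sm ip
proof
  fix u v w a
  show "ip (u + v) w = ip u w + ip v w" using hilbert unfolding hilbert_space_def by blast
  show "ip (sm a u) v = a * ip u v" using hilbert unfolding hilbert_space_def by blast
  show "ip v u = cnj (ip u v)" using hilbert unfolding hilbert_space_def by blast
  show "Im (ip u u) = 0" using hilbert unfolding hilbert_space_def by blast
  show "Re (ip u u) \<ge> 0" using hilbert unfolding hilbert_space_def by blast
qed

context hilbert
begin

lemma sm_mult [rule_format]: "\<forall>a b u. sm a (sm b u) = sm (a * b) u"
  using hilbert unfolding hilbert_space_def by (elim conjE) assumption

lemma sm_add_right [rule_format]: "\<forall>a u v. sm a (u + v) = sm a u + sm a v"
  using hilbert unfolding hilbert_space_def by (elim conjE) assumption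

lemma ip_self_eq_0_imp [rule_format]: "\<forall>u. ip u u = 0 \<longrightarrow> u = 0"
  using hilbert unfolding hilbert_space_def by (elim conjE) assumption

lemma sm_diff_right: "sm a (u - v) = sm a u - sm a v"
  using sm_add_right[of a "u - v" v] by (simp add: algebra_simps)

lemma hnorm_eq_0_iff: "hnorm ip u = 0 \<longleftrightarrow> u = 0"
proof
  assume "hnorm ip u = 0"
  then have "ip u u = 0" by (simp add: form_diag)
  then show "u = 0" by (rule ip_self_eq_0_imp)
qed simp

lemma compact_op_add: "compact_op sm ip T \<Longrightarrow> T (u + v) = T u + T v"
  by (simp add: compact_op_def)

lemma compact_op_sm: "compact_op sm ip T \<Longrightarrow> T (sm c u) = sm c (T u)"
  by (simp add: compact_op_def)

lemma compact_op_diff: "compact_op sm ip T \<Longrightarrow> T (u - v) = T u - T v"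
  using compact_op_add[of T "u - v" v] by (simp add: algebra_simps)

lemma compact_op_zero: "compact_op sm ip T \<Longrightarrow> T 0 = 0"
  using compact_op_diff[of T 0 0] by simp

lemma compact_op_convergent_subseq:
  fixes X :: "nat \<Rightarrow> 'h"
  assumes "compact_op sm ip T" and "\<And>n. hnorm ip (X n) \<le> B"
  obtains r L where "strict_mono r" and "(\<lambda>n. hnorm ip (T (X (r n)) - L)) \<longlonglongrightarrow> 0"
proof -
  have "\<forall>(X :: nat \<Rightarrow> 'h) B. (\<forall>n. hnorm ip (X n) \<le> B) \<longrightarrow>
      (\<exists>(r :: nat \<Rightarrow> nat) L. strict_mono r \<and> (\<lambda>n. hnorm ip (T (X (r n)) - L)) \<longlonglongrightarrow> 0)"
    using assms(1) unfolding compact_op_def by (elim conjE) assumption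
  then have "\<exists>r L. strict_mono r \<and> (\<lambda>n. hnorm ip (T (X (r n)) - L)) \<longlonglongrightarrow> 0"
    using assms(2) by blast
  then show ?thesis using that by blast
qed

lemma compact_op_bdd_above:
  assumes T: "compact_op sm ip T"
  shows "bdd_above {hnorm ip (T u) | u. hnorm ip u \<le> 1}"
proof (rule ccontr)
  assume "\<not> ?thesis"
  then have "\<exists>u. hnorm ip u \<le> 1 \<and> real n < hnorm ip (T u)" for n
    unfolding bdd_above_def by (auto simp: not_le)
  then obtain U where U1: "\<And>n. hnorm ip (U n) \<le> 1" and U2: "\<And>n. real n < hnorm ip (T (U n))"
    by metis
  obtain r L where r: "strict_mono r" and lim: "(\<lambda>n. hnorm ip (T (U (r n)) - L)) \<longlonglongrightarrow> 0"
    using compact_op_convergent_subseq[OF T U1] .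
  have "\<forall>\<^sub>F n in sequentially. hnorm ip (T (U (r n))) < hnorm ip L + 1"
    using order_tendstoD(2)[OF hnorm_tendsto[OF lim]] by simp
  moreover have "\<forall>\<^sub>F n in sequentially. hnorm ip L + 1 \<le> real n"
    using eventually_ge_at_top[of "nat \<lceil>hnorm ip L + 1\<rceil>"] by (rule eventually_mono) linarith
  ultimately have "\<forall>\<^sub>F n in sequentially. hnorm ip (T (U (r n))) < real n"
    by eventually_elim simp
  then obtain n where "hnorm ip (T (U (r n))) < real n"
    unfolding eventually_sequentially by blast
  moreover have "real n \<le> real (r n)" using seq_suble[OF r] by simp
  ultimately show False using U2[of "r n"] by linarith
qed

lemma op_norm_set_nonempty: "{hnorm ip (T u) |u. hnorm ip u \<le> 1} \<noteq> {}"
  using hnorm_zero by (metis (mono_tags, lifting) empty_Collect_eq zero_less_one_class.zero_le_one)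

lemma op_norm_nonneg: "compact_op sm ip T \<Longrightarrow> op_norm ip T \<ge> 0"
  unfolding op_norm_def
  by (rule cSup_upper2[of "hnorm ip (T 0)"]) (force simp: compact_op_bdd_above hnorm_nonneg)+

lemma hnorm_op_le_op_norm: "compact_op sm ip T \<Longrightarrow> hnorm ip u \<le> 1 \<Longrightarrow> hnorm ip (T u) \<le> op_norm ip T"
  unfolding op_norm_def by (rule cSup_upper) (auto simp: compact_op_bdd_above)

lemma hnorm_op_le:
  assumes T: "compact_op sm ip T"
  shows "hnorm ip (T u) \<le> op_norm ip T * hnorm ip u"
proof (cases "u = 0")
  case True
  then show ?thesis using compact_op_zero[OF T] by simp
next
  case False
  then have u: "hnorm ip u > 0" using hnorm_eq_0_iff hnorm_nonneg by (metis less_eq_real_def)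
  define v where "v = sm (complex_of_real (1 / hnorm ip u)) u"
  have "hnorm ip (T v) \<le> op_norm ip T"
    using u by (intro hnorm_op_le_op_norm[OF T]) (simp add: v_def hnorm_scale norm_divide)
  moreover have "hnorm ip (T v) = hnorm ip (T u) / hnorm ip u"
    using u by (simp add: v_def compact_op_sm[OF T] hnorm_scale norm_divide)
  ultimately show ?thesis using u by (simp add: field_simps)
qed

lemma op_norm_le:
  assumes "\<And>u. hnorm ip u \<le> 1 \<Longrightarrow> hnorm ip (T u) \<le> c"
  shows "op_norm ip T \<le> c"
  unfolding op_norm_def
proof (rule cSup_least)
  show "{hnorm ip (T u) |u. hnorm ip u \<le> 1} \<noteq> {}"
    by (rule op_norm_set_nonempty)
qed (use assms in blast)

lemma op_norm_eq_0:
  assumes "compact_op sm ip T" and "op_norm ip T = 0"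
  shows "T u = 0"
  using hnorm_op_le[OF assms(1), of u] assms(2) hnorm_nonneg[of "T u"] hnorm_eq_0_iff[of "T u"]
  by simp

lemma op_norm_approx:
  assumes T: "compact_op sm ip T"
  obtains U where "\<And>n. hnorm ip (U n) \<le> 1" and "(\<lambda>n. hnorm ip (T (U n))) \<longlonglongrightarrow> op_norm ip T"
proof -
  define M where "M = op_norm ip T"
  have "\<exists>u. hnorm ip u \<le> 1 \<and> M - inverse (real (Suc n)) < hnorm ip (T u)" for n
  proof -
    have "{hnorm ip (T u) |u. hnorm ip u \<le> 1} \<noteq> {}"
      using hnorm_zero by (metis (mono_tags, lifting) empty_Collect_eq zero_less_one_class.zero_le_one)
    moreover have "M - inverse (real (Suc n)) < Sup {hnorm ip (T u) |u. hnorm ip u \<le> 1}"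
      by (simp add: M_def op_norm_def)
    ultimately show ?thesis using less_cSup_iff[OF _ compact_op_bdd_above[OF T]] by blast
  qed
  then obtain U where U1: "\<And>n. hnorm ip (U n) \<le> 1"
    and U2: "\<And>n. M - inverse (real (Suc n)) < hnorm ip (T (U n))"
    by metis
  have "(\<lambda>n. hnorm ip (T (U n))) \<longlonglongrightarrow> M"
  proof (rule real_tendsto_sandwich)
    show "\<forall>\<^sub>F n in sequentially. M - inverse (real (Suc n)) \<le> hnorm ip (T (U n))"
      using U2 by (simp add: less_imp_le)
    show "\<forall>\<^sub>F n in sequentially. hnorm ip (T (U n)) \<le> M"
      using hnorm_op_le_op_norm[OF T U1] by (simp add: M_def)
    show "(\<lambda>n. M - inverse (real (Suc n))) \<longlonglongrightarrow> M"
      using tendsto_diff[OF tendsto_const LIMSEQ_inverse_real_of_nat] by simp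
  qed simp
  then show ?thesis using U1 that unfolding M_def by blast
qed

lemma hnorm_sq_eigen_defect:
  assumes T: "compact_op sm ip T" and adj: "\<And>u v. ip (T u) v = ip u (T v)"
    and u: "hnorm ip u \<le> 1"
  defines "M \<equiv> op_norm ip T"
  shows "(hnorm ip (sm (of_real (M\<^sup>2)) u - T (T u)))\<^sup>2 \<le> 2 * M ^ 3 * (M - hnorm ip (T u))"
proof -
  define c where "c = complex_of_real (M\<^sup>2)"
  have M: "M \<ge> 0" by (simp add: M_def op_norm_nonneg[OF T])
  have Tu: "hnorm ip (T u) \<le> M"
    using hnorm_op_le[OF T, of u] u M hnorm_nonneg[of u] unfolding M_def
    by (meson mult_left_le order_trans)
  have "Re (ip (sm c u) (sm c u)) = M ^ 4 * (hnorm ip u)\<^sup>2"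
    by (simp add: Re_form_scale_diag c_def power2_hnorm norm_power)
  also have "\<dots> \<le> M ^ 4"
    using u hnorm_nonneg[of u] by (simp add: mult_left_le power_le_one)
  finally have cc: "Re (ip (sm c u) (sm c u)) \<le> M ^ 4" .
  have "ip (sm c u) (T (T u)) = c * ip (T u) (T u)"
    by (simp add: form_scale_left adj)
  then have ct: "Re (ip (sm c u) (T (T u))) = M\<^sup>2 * (hnorm ip (T u))\<^sup>2"
    by (simp add: c_def power2_hnorm)
  have "hnorm ip (T (T u)) \<le> M * hnorm ip (T u)"
    unfolding M_def by (rule hnorm_op_le[OF T])
  then have tt: "Re (ip (T (T u)) (T (T u))) \<le> M\<^sup>2 * (hnorm ip (T u))\<^sup>2"
    by (metis power2_hnorm power_mono hnorm_nonneg power_mult_distrib)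
  have "(hnorm ip (sm c u - T (T u)))\<^sup>2 \<le> M ^ 4 - M\<^sup>2 * (hnorm ip (T u))\<^sup>2"
    using cc ct tt by (simp add: power2_hnorm Re_form_diff)
  also have "\<dots> = M\<^sup>2 * (M + hnorm ip (T u)) * (M - hnorm ip (T u))"
    by (simp add: algebra_simps power2_eq_square power4_eq_xxxx)
  also have "\<dots> \<le> M\<^sup>2 * (2 * M) * (M - hnorm ip (T u))"
    using Tu M by (intro mult_right_mono mult_left_mono) auto
  finally show ?thesis by (simp add: c_def power2_eq_square power3_eq_cube mult_ac)
qed

lemma hnorm_sq_eigen_defect_transfer:
  assumes T: "compact_op sm ip T"
  defines "M \<equiv> op_norm ip T"
  shows "hnorm ip (T (T L) - sm (of_real (M\<^sup>2)) L)
    \<le> 2 * M\<^sup>2 * hnorm ip (T u - L) + M * hnorm ip (sm (of_real (M\<^sup>2)) u - T (T u))"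
proof -
  define c where "c = complex_of_real (M\<^sup>2)"
  have M: "M \<ge> 0" by (simp add: M_def op_norm_nonneg[OF T])
  have split: "T (T L) - sm c L = T (T (L - T u)) + T (T (T u) - sm c u) + sm c (T u - L)"
    by (simp add: compact_op_diff[OF T] compact_op_sm[OF T] sm_diff_right)
  have "hnorm ip (T (T (L - T u))) \<le> M * (M * hnorm ip (T u - L))"
    using hnorm_op_le[OF T, of "T (L - T u)"] hnorm_op_le[OF T, of "L - T u"] M
    by (simp add: M_def hnorm_diff_commute[of L] order_trans mult_left_mono)
  moreover have "hnorm ip (T (T (T u) - sm c u)) \<le> M * hnorm ip (sm c u - T (T u))"
    using hnorm_op_le[OF T, of "T (T u) - sm c u"] by (simp add: M_def hnorm_diff_commute[of "T (T u)"])
  moreover have "hnorm ip (sm c (T u - L)) = M\<^sup>2 * hnorm ip (T u - L)"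
    by (simp add: c_def hnorm_scale norm_power)
  ultimately show ?thesis
    using hnorm_triangle[of "T (T (L - T u)) + T (T (T u) - sm c u)" "sm c (T u - L)"]
      hnorm_triangle[of "T (T (L - T u))" "T (T (T u) - sm c u)"]
    unfolding split c_def[symmetric] by (simp add: power2_eq_square)
qed

lemma exists_sq_eigenvector:
  assumes T: "compact_op sm ip T" and adj: "\<And>u v. ip (T u) v = ip u (T v)"
  defines "M \<equiv> op_norm ip T"
  obtains L where "hnorm ip L = M" and "T (T L) = sm (of_real (M\<^sup>2)) L"
proof -
  define c where "c = complex_of_real (M\<^sup>2)"
  have M: "M \<ge> 0" by (simp add: M_def op_norm_nonneg[OF T])
  obtain U where U1: "\<And>n. hnorm ip (U n) \<le> 1" and U2: "(\<lambda>n. hnorm ip (T (U n))) \<longlonglongrightarrow> M"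
    using op_norm_approx[OF T] unfolding M_def by blast
  obtain r L where r: "strict_mono r" and D: "(\<lambda>n. hnorm ip (T (U (r n)) - L)) \<longlonglongrightarrow> 0"
    using compact_op_convergent_subseq[OF T U1] .
  have TUr: "(\<lambda>n. hnorm ip (T (U (r n)))) \<longlonglongrightarrow> M"
    using LIMSEQ_subseq_LIMSEQ[OF U2 r] by (simp add: comp_def)
  have G: "(\<lambda>n. hnorm ip (sm c (U (r n)) - T (T (U (r n))))) \<longlonglongrightarrow> 0"
  proof (rule real_tendsto_sandwich[where f = "\<lambda>n. 0"])
    show "\<forall>\<^sub>F n in sequentially. hnorm ip (sm c (U (r n)) - T (T (U (r n))))
        \<le> sqrt (2 * M ^ 3 * (M - hnorm ip (T (U (r n)))))"
      using hnorm_sq_eigen_defect[OF T adj U1] hnorm_nonneg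
      by (simp add: c_def M_def real_le_rsqrt)
    show "(\<lambda>n. sqrt (2 * M ^ 3 * (M - hnorm ip (T (U (r n)))))) \<longlonglongrightarrow> 0"
      using tendsto_intros(1-) TUr by (auto intro!: tendsto_eq_intros)
  qed (simp_all add: hnorm_nonneg)
  have "hnorm ip (T (T L) - sm c L) \<le> 0"
  proof (rule LIMSEQ_le_const)
    show "(\<lambda>n. 2 * M\<^sup>2 * hnorm ip (T (U (r n)) - L) + M * hnorm ip (sm c (U (r n)) - T (T (U (r n)))))
        \<longlonglongrightarrow> 0"
      using tendsto_add[OF tendsto_mult_right_zero[OF D] tendsto_mult_right_zero[OF G]] by simp
  qed (use hnorm_sq_eigen_defect_transfer[OF T] in \<open>auto simp: c_def M_def\<close>)
  then have "T (T L) = sm c L"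
    by (metis hnorm_eq_0_iff hnorm_nonneg order_antisym right_minus_eq)
  moreover have "hnorm ip L = M"
    using LIMSEQ_unique[OF hnorm_tendsto[OF D] TUr] .
  ultimately show ?thesis using that by (simp add: c_def)
qed

lemma eigenvector_of_sq_eigenvector:
  assumes T: "compact_op sm ip T" and pos: "\<And>u. Re (ip (T u) u) \<ge> 0" and m: "m > 0"
    and sq: "T (T \<xi>) = sm (of_real (m\<^sup>2)) \<xi>"
  shows "T \<xi> = sm (of_real m) \<xi>"
proof -
  define v where "v = T \<xi> - sm (of_real m) \<xi>"
  have "T v + sm (of_real m) v = 0"
    by (simp add: v_def compact_op_diff[OF T] compact_op_sm[OF T] sq sm_diff_right sm_mult power2_eq_square)
  then have "ip (T v) v + of_real m * ip v v = 0"
    using form_add_left[of "T v" "sm (of_real m) v" v] by (simp add: form_scale_left form_zero_left)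
  then have "Re (ip (T v) v + of_real m * ip v v) = 0"
    by (simp only: zero_complex.sel)
  then have "Re (ip (T v) v) + m * Re (ip v v) = 0"
    by simp
  then have "Re (ip (T v) v) = - m * (hnorm ip v)\<^sup>2"
    by (simp add: power2_hnorm)
  then have "hnorm ip v = 0"
    using pos[of v] m by (simp add: mult_le_0_iff)
  then show ?thesis by (simp add: v_def hnorm_eq_0_iff)
qed

lemma exists_norm_eigenvector:
  assumes T: "compact_op sm ip T" and adj: "\<And>u v. ip (T u) v = ip u (T v)"
    and pos: "\<And>u. Re (ip (T u) u) \<ge> 0" and M: "op_norm ip T > 0"
  obtains \<xi> where "hnorm ip \<xi> = 1" and "T \<xi> = sm (of_real (op_norm ip T)) \<xi>"
proof -
  define M where "M = op_norm ip T"
  obtain L where L: "hnorm ip L = M" and TTL: "T (T L) = sm (of_real (M\<^sup>2)) L"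
    using exists_sq_eigenvector[OF T adj] unfolding M_def by blast
  define \<xi> where "\<xi> = sm (of_real (1 / M)) L"
  have "hnorm ip \<xi> = 1" using L M by (simp add: \<xi>_def hnorm_scale M_def norm_divide)
  moreover have "T (T \<xi>) = sm (of_real (M\<^sup>2)) \<xi>"
    by (simp add: \<xi>_def compact_op_sm[OF T] TTL sm_mult mult.commute)
  then have "T \<xi> = sm (of_real M) \<xi>"
    using eigenvector_of_sq_eigenvector[OF T pos] M by (simp add: M_def)
  ultimately show ?thesis using that by (simp add: M_def)
qed

lemma eigenvector_of_norming_vector:
  assumes T: "compact_op sm ip T" and \<xi>: "hnorm ip \<xi> = 1"
    and norming: "Re (ip (T \<xi>) \<xi>) = op_norm ip T"
  shows "T \<xi> = sm (of_real (op_norm ip T)) \<xi>"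
proof -
  define M where "M = op_norm ip T"
  define v where "v = T \<xi> - sm (of_real M) \<xi>"
  have M: "M \<ge> 0" by (simp add: M_def op_norm_nonneg[OF T])
  have "hnorm ip (T \<xi>) \<le> M" using hnorm_op_le[OF T, of \<xi>] \<xi> by (simp add: M_def)
  then have "(hnorm ip (T \<xi>))\<^sup>2 \<le> M\<^sup>2" by (simp add: hnorm_nonneg power_mono)
  moreover have "(hnorm ip v)\<^sup>2 = (hnorm ip (T \<xi>))\<^sup>2 - 2 * M * M + M\<^sup>2"
    using norming power2_hnorm[of \<xi>] \<xi>
    by (simp add: v_def power2_hnorm Re_form_diff form_scale_right[of "T \<xi>"]
        Re_form_scale_diag M_def[symmetric])
  ultimately have "(hnorm ip v)\<^sup>2 \<le> 0" by (simp add: power2_eq_square)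
  then show ?thesis by (simp add: v_def M_def hnorm_eq_0_iff)
qed

lemma ip_idempotent:
  assumes adj: "\<And>u v. ip (T u) v = ip u (T v)" and idem: "\<And>u. T (T u) = T u"
  shows "ip (T u) u = of_real ((hnorm ip (T u))\<^sup>2)"
  by (metis adj idem form_diag)

lemma op_norm_idempotent:
  assumes T: "compact_op sm ip T" and adj: "\<And>u v. ip (T u) v = ip u (T v)"
    and idem: "\<And>u. T (T u) = T u" and nonzero: "T u \<noteq> 0"
  shows "op_norm ip T = 1"
proof (rule antisym)
  show "op_norm ip T \<le> 1"
  proof (rule op_norm_le)
    fix v assume v: "hnorm ip v \<le> 1"
    have "(hnorm ip (T v))\<^sup>2 \<le> hnorm ip (T v) * hnorm ip v"
      using ip_idempotent[OF adj idem, of v] cauchy_schwarz[of "T v" v] by (simp add: norm_power)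
    then show "hnorm ip (T v) \<le> 1"
      using v hnorm_nonneg[of "T v"] by (cases "hnorm ip (T v) = 0") (auto simp: power2_eq_square)
  qed
  have "hnorm ip (T u) \<le> op_norm ip T * hnorm ip (T u)"
    using hnorm_op_le[OF T, of "T u"] by (simp add: idem)
  then show "1 \<le> op_norm ip T"
    using nonzero hnorm_nonneg[of "T u"] hnorm_eq_0_iff[of "T u"] by simp
qed

end

section \<open>Vector states on a Hilbert \<open>K(H)\<close>-module\<close>

locale hilbert_KH =
  fixes sm :: "complex \<Rightarrow> 'h::ab_group_add \<Rightarrow> 'h" and ip :: "'h \<Rightarrow> 'h \<Rightarrow> complex"
    and esm :: "complex \<Rightarrow> 'e::ab_group_add \<Rightarrow> 'e" and act :: "('h \<Rightarrow> 'h) \<Rightarrow> 'e \<Rightarrow> 'e"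
    and eip :: "'e \<Rightarrow> 'e \<Rightarrow> ('h \<Rightarrow> 'h)"
  assumes module: "hilbert_KH_module sm ip esm act eip"

sublocale hilbert_KH \<subseteq> hilbert sm ip
  using module unfolding hilbert_KH_module_def hilbert_def by (elim conjE) assumption

context hilbert_KH
begin

lemma esm_one [rule_format]: "\<forall>x. esm 1 x = x"
  using module unfolding hilbert_KH_module_def by (elim conjE) assumption

lemma eip_compact [rule_format]: "\<forall>x y. compact_op sm ip (eip x y)"
  using module unfolding hilbert_KH_module_def by (elim conjE) assumption

lemma eip_add_left [rule_format]: "\<forall>x y z. eip (x + y) z = (\<lambda>u. eip x z u + eip y z u)"
  using module unfolding hilbert_KH_module_def by (elim conjE) assumption

lemma eip_esm_left [rule_format]: "\<forall>c x y. eip (esm c x) y = (\<lambda>u. sm c (eip x y u))"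
  using module unfolding hilbert_KH_module_def by (elim conjE) assumption

lemma eip_act_left [rule_format]:
  "\<forall>a x y. compact_op sm ip a \<longrightarrow> eip (act a x) y = a \<circ> eip x y"
  using module unfolding hilbert_KH_module_def by (elim conjE) assumption

lemma eip_adjoint [rule_format]: "\<forall>x y u v. ip (eip x y u) v = ip u (eip y x v)"
  using module unfolding hilbert_KH_module_def by (elim conjE) assumption

lemma eip_diag_nonneg [rule_format]:
  "\<forall>x u. Im (ip (eip x x u) u) = 0 \<and> Re (ip (eip x x u) u) \<ge> 0"
  using module unfolding hilbert_KH_module_def by (elim conjE) assumption

lemma eip_self_eq_0_iff [rule_format]: "\<forall>x. eip x x = (\<lambda>u. 0) \<longleftrightarrow> x = 0"
  using module unfolding hilbert_KH_module_def by (elim conjE) assumption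

definition state_ip :: "'h \<Rightarrow> 'e \<Rightarrow> 'e \<Rightarrow> complex" where
  "state_ip \<xi> z w = ip (eip z w \<xi>) \<xi>"

lemma pos_herm_form_state_ip: "pos_herm_form esm (state_ip \<xi>)"
proof
  fix u v w :: 'e and a
  show "state_ip \<xi> (u + v) w = state_ip \<xi> u w + state_ip \<xi> v w"
    by (simp add: state_ip_def eip_add_left form_add_left)
  show "state_ip \<xi> (esm a u) v = a * state_ip \<xi> u v"
    by (simp add: state_ip_def eip_esm_left form_scale_left)
  show "state_ip \<xi> v u = cnj (state_ip \<xi> u v)"
    by (simp add: state_ip_def eip_adjoint[of v u \<xi> \<xi>] form_cnj_swap[of \<xi>])
  show "Im (state_ip \<xi> u u) = 0" "Re (state_ip \<xi> u u) \<ge> 0"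
    by (simp_all add: state_ip_def eip_diag_nonneg)
qed

lemma state_ip_act: "compact_op sm ip a \<Longrightarrow> state_ip \<xi> (act a x) y = ip (a (eip x y \<xi>)) \<xi>"
  by (simp add: state_ip_def eip_act_left)

lemma mnorm_nonneg: "mnorm ip eip z \<ge> 0"
  by (simp add: mnorm_def op_norm_nonneg[OF eip_compact])

lemma power2_mnorm: "(mnorm ip eip z)\<^sup>2 = op_norm ip (eip z z)"
  by (simp add: mnorm_def op_norm_nonneg[OF eip_compact])

lemma Re_state_ip_le: "Re (state_ip \<xi> z z) \<le> (mnorm ip eip z)\<^sup>2 * (hnorm ip \<xi>)\<^sup>2"
proof -
  have "Re (state_ip \<xi> z z) \<le> hnorm ip (eip z z \<xi>) * hnorm ip \<xi>"
    unfolding state_ip_def using complex_Re_le_cmod cauchy_schwarz order_trans by blast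
  also have "\<dots> \<le> op_norm ip (eip z z) * hnorm ip \<xi> * hnorm ip \<xi>"
    by (intro mult_right_mono hnorm_op_le[OF eip_compact] hnorm_nonneg)
  finally show ?thesis by (simp add: power2_eq_square mult.assoc flip: power2_mnorm)
qed

lemma hnorm_state_ip_le: "hnorm (state_ip \<xi>) z \<le> mnorm ip eip z * hnorm ip \<xi>"
  using Re_state_ip_le[of \<xi> z] mnorm_nonneg[of z] hnorm_nonneg[of \<xi>]
  by (simp add: hnorm_def real_sqrt_le_iff power_mult_distrib[symmetric] real_le_lsqrt)

lemma hnorm_eip_self_le:
  assumes x: "mnorm ip eip x = 1"
  shows "hnorm ip (eip x x \<xi>) \<le> hnorm ip \<xi>"
  using hnorm_op_le[OF eip_compact, of x x \<xi>] x by (simp flip: power2_mnorm)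

lemma exists_norming_state:
  assumes "mnorm ip eip z > 0"
  obtains \<xi> where "hnorm ip \<xi> = 1" and "Re (state_ip \<xi> z z) = (mnorm ip eip z)\<^sup>2"
proof -
  have "op_norm ip (eip z z) > 0" using assms by (simp flip: power2_mnorm)
  then obtain \<xi> where \<xi>: "hnorm ip \<xi> = 1"
    and eigen: "eip z z \<xi> = sm (of_real (op_norm ip (eip z z))) \<xi>"
    using exists_norm_eigenvector[OF eip_compact eip_adjoint] eip_diag_nonneg by blast
  have "Re (state_ip \<xi> z z) = (mnorm ip eip z)\<^sup>2"
    using \<xi> by (simp add: state_ip_def eigen form_scale_left power2_mnorm power2_hnorm[symmetric])
  with \<xi> show ?thesis using that by blast
qed

lemma mnorm_add_scale_le: "mnorm ip eip (x + esm a y) \<le> mnorm ip eip x + cmod a * mnorm ip eip y"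
proof (cases "mnorm ip eip (x + esm a y) = 0")
  case True
  then show ?thesis by (simp add: mnorm_nonneg)
next
  case False
  then obtain \<xi> where \<xi>: "hnorm ip \<xi> = 1"
    and norming: "Re (state_ip \<xi> (x + esm a y) (x + esm a y)) = (mnorm ip eip (x + esm a y))\<^sup>2"
    using exists_norming_state mnorm_nonneg by (metis less_eq_real_def)
  interpret S: pos_herm_form esm "state_ip \<xi>" by (rule pos_herm_form_state_ip)
  have "mnorm ip eip (x + esm a y) = hnorm (state_ip \<xi>) (x + esm a y)"
    using norming mnorm_nonneg by (simp add: hnorm_def)
  also have "\<dots> \<le> hnorm (state_ip \<xi>) x + cmod a * hnorm (state_ip \<xi>) y"
    using S.hnorm_triangle[of x "esm a y"] by (simp add: S.hnorm_scale)
  also have "\<dots> \<le> mnorm ip eip x + cmod a * mnorm ip eip y"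
    using hnorm_state_ip_le[of \<xi>] \<xi> by (simp add: add_mono mult_left_mono)
  finally show ?thesis .
qed

lemma mnorm_eq_0_iff: "mnorm ip eip z = 0 \<longleftrightarrow> z = 0"
proof
  assume "mnorm ip eip z = 0"
  then have "eip z z = (\<lambda>u. 0)"
    using op_norm_eq_0[OF eip_compact] by (auto simp flip: power2_mnorm)
  then show "z = 0" by (simp add: eip_self_eq_0_iff)
next
  assume "z = 0"
  then have "op_norm ip (eip z z) \<le> 0"
    using eip_self_eq_0_iff[of 0] by (intro op_norm_le) simp
  then show "mnorm ip eip z = 0"
    using mnorm_nonneg[of z] by (simp flip: power2_mnorm)
qed

lemma bj_orth_of_norming_state:
  assumes \<xi>: "hnorm ip \<xi> = 1" and norming: "Re (state_ip \<xi> x x) = (mnorm ip eip x)\<^sup>2"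
    and vanish: "state_ip \<xi> w x = 0"
  shows "bj_orth (mnorm ip eip) esm x w"
  unfolding bj_orth_def
proof
  fix a
  interpret S: pos_herm_form esm "state_ip \<xi>" by (rule pos_herm_form_state_ip)
  have "state_ip \<xi> x w = 0" using S.form_cnj_swap[of x w] vanish by simp
  then have "(mnorm ip eip x)\<^sup>2 \<le> Re (state_ip \<xi> (x + esm a w) (x + esm a w))"
    using norming S.Re_form_add_scale[of x a w] S.Re_form_diag_nonneg[of w] by simp
  also have "\<dots> \<le> (mnorm ip eip (x + esm a w))\<^sup>2"
    using Re_state_ip_le[of \<xi>] \<xi> by simp
  finally show "mnorm ip eip x \<le> mnorm ip eip (x + esm a w)"
    using mnorm_nonneg power2_le_imp_le by blast
qed

lemma mnorm_eq_1_of_idempotent: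
  assumes idem: "\<And>u. eip x x (eip x x u) = eip x x u" and "x \<noteq> 0"
  shows "mnorm ip eip x = 1"
proof -
  obtain u where "eip x x u \<noteq> 0" using \<open>x \<noteq> 0\<close> eip_self_eq_0_iff by blast
  then have "op_norm ip (eip x x) = 1"
    using op_norm_idempotent[OF eip_compact eip_adjoint idem] by blast
  then show ?thesis using mnorm_nonneg[of x] by (simp add: mnorm_def)
qed

section \<open>Norm-parallelism implies orthogonality\<close>

lemma parallel_norming_state:
  assumes l: "cmod l = 1"
    and par: "mnorm ip eip (x + esm l y) = mnorm ip eip x + mnorm ip eip y"
    and pos: "mnorm ip eip x + mnorm ip eip y > 0"
  obtains \<xi> where "hnorm ip \<xi> = 1"
    and "Re (state_ip \<xi> x x) = (mnorm ip eip x)\<^sup>2" and "Re (state_ip \<xi> y y) = (mnorm ip eip y)\<^sup>2"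
    and "state_ip \<xi> x y = l * of_real (mnorm ip eip x * mnorm ip eip y)"
proof -
  define t where "t = mnorm ip eip x"
  define s where "s = mnorm ip eip y"
  obtain \<xi> where \<xi>: "hnorm ip \<xi> = 1"
    and norming: "Re (state_ip \<xi> (x + esm l y) (x + esm l y)) = (t + s)\<^sup>2"
    using exists_norming_state[of "x + esm l y"] par pos by (metis s_def t_def)
  interpret S: pos_herm_form esm "state_ip \<xi>" by (rule pos_herm_form_state_ip)
  have a: "Re (state_ip \<xi> x x) \<le> t\<^sup>2" and c: "Re (state_ip \<xi> y y) \<le> s\<^sup>2"
    using Re_state_ip_le[of \<xi> x] Re_state_ip_le[of \<xi> y] \<xi> by (simp_all add: t_def s_def)
  have "cmod (state_ip \<xi> x y) \<le> hnorm (state_ip \<xi>) x * hnorm (state_ip \<xi>) y"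
    by (rule S.cauchy_schwarz)
  also have "\<dots> \<le> t * s"
    using hnorm_state_ip_le[of \<xi>] \<xi>
    by (intro mult_mono) (simp_all add: S.hnorm_nonneg mnorm_nonneg t_def s_def)
  finally have cs: "cmod (state_ip \<xi> x y) \<le> t * s" .
  then have Re_xy: "Re (cnj l * state_ip \<xi> x y) \<le> t * s"
    using complex_Re_le_cmod[of "cnj l * state_ip \<xi> x y"] l by (simp add: norm_mult)
  have "(t + s)\<^sup>2 = Re (state_ip \<xi> x x) + 2 * Re (cnj l * state_ip \<xi> x y) + Re (state_ip \<xi> y y)"
    using norming S.Re_form_add_scale[of x l y] l by simp
  then have xx: "Re (state_ip \<xi> x x) = t\<^sup>2" and yy: "Re (state_ip \<xi> y y) = s\<^sup>2"
    and "Re (cnj l * state_ip \<xi> x y) = t * s"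
    using a c Re_xy by (simp_all add: power2_sum)
  then have "cnj l * state_ip \<xi> x y = of_real (t * s)"
    using cs l by (intro complex_eq_of_real_if_cmod_le_Re) (simp_all add: norm_mult)
  then have "state_ip \<xi> x y = l * of_real (t * s)"
    using l by (metis complex_norm_square mult.assoc mult_1 norm_one of_real_1 power_one)
  then show ?thesis using that \<xi> xx yy by (simp add: t_def s_def)
qed

lemma state_ip_act_eigen:
  assumes "eip z z \<xi> = sm c \<xi>" and "compact_op sm ip a"
  shows "state_ip \<xi> (act a z) z = c * ip (a \<xi>) \<xi>"
  using assms by (simp add: state_ip_act compact_op_sm form_scale_left)

lemma parallel_norming_eigenvector:
  assumes l: "cmod l = 1"
    and par: "mnorm ip eip (x + esm l y) = mnorm ip eip x + mnorm ip eip y"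
    and pos: "mnorm ip eip x + mnorm ip eip y > 0"
  defines "t \<equiv> mnorm ip eip x" and "s \<equiv> mnorm ip eip y"
  obtains \<xi> where "hnorm ip \<xi> = 1"
    and "Re (state_ip \<xi> x x) = t\<^sup>2" and "Re (state_ip \<xi> y y) = s\<^sup>2"
    and "eip x x \<xi> = sm (of_real (t\<^sup>2)) \<xi>" and "eip y y \<xi> = sm (of_real (s\<^sup>2)) \<xi>"
    and "ip (eip y x \<xi>) \<xi> = cnj l * of_real (t * s)"
proof -
  obtain \<xi> where \<xi>: "hnorm ip \<xi> = 1"
    and xx: "Re (state_ip \<xi> x x) = t\<^sup>2" and yy: "Re (state_ip \<xi> y y) = s\<^sup>2"
    and xy: "state_ip \<xi> x y = l * of_real (t * s)"
    using parallel_norming_state[OF l par pos] unfolding t_def s_def by blast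
  interpret S: pos_herm_form esm "state_ip \<xi>" by (rule pos_herm_form_state_ip)
  have "eip x x \<xi> = sm (of_real (t\<^sup>2)) \<xi>" and "eip y y \<xi> = sm (of_real (s\<^sup>2)) \<xi>"
    using eigenvector_of_norming_vector[OF eip_compact \<xi>] xx yy
    by (simp_all add: state_ip_def t_def s_def power2_mnorm)
  moreover have "ip (eip y x \<xi>) \<xi> = cnj l * of_real (t * s)"
    using S.form_cnj_swap[of y x] xy by (simp add: state_ip_def)
  ultimately show ?thesis using that \<xi> xx yy by blast
qed

lemma parallel_imp_bj_orth:
  assumes l: "cmod l = 1"
    and par: "mnorm ip eip (x + esm l y) = mnorm ip eip x + mnorm ip eip y"
  shows "\<exists>k. cmod k = 1 \<and>
    bj_orth (mnorm ip eip) esm x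
      (esm (of_real (mnorm ip eip y)) (act (eip x x) x) +
       esm k (esm (of_real (mnorm ip eip x)) (act (eip y x) x))) \<and>
    bj_orth (mnorm ip eip) esm y
      (esm (of_real (mnorm ip eip x)) (act (eip y y) y) +
       esm k (esm (of_real (mnorm ip eip y)) (act (eip y x) y)))"
proof (cases "mnorm ip eip x + mnorm ip eip y = 0")
  case True
  then have "mnorm ip eip x = 0" "mnorm ip eip y = 0"
    using mnorm_nonneg[of x] mnorm_nonneg[of y] by linarith+
  then show ?thesis by (intro exI[of _ 1]) (simp add: bj_orth_def mnorm_nonneg)
next
  case False
  define t where "t = mnorm ip eip x"
  define s where "s = mnorm ip eip y"
  obtain \<xi> where \<xi>: "hnorm ip \<xi> = 1"
    and xx: "Re (state_ip \<xi> x x) = t\<^sup>2" and yy: "Re (state_ip \<xi> y y) = s\<^sup>2"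
    and ex: "eip x x \<xi> = sm (of_real (t\<^sup>2)) \<xi>" and ey: "eip y y \<xi> = sm (of_real (s\<^sup>2)) \<xi>"
    and ip_yx: "ip (eip y x \<xi>) \<xi> = cnj l * of_real (t * s)"
    using parallel_norming_eigenvector[OF l par] False mnorm_nonneg[of x] mnorm_nonneg[of y]
    unfolding t_def s_def by (metis add_nonneg_nonneg less_eq_real_def)
  interpret S: pos_herm_form esm "state_ip \<xi>" by (rule pos_herm_form_state_ip)
  have ip_x: "ip (eip x x \<xi>) \<xi> = of_real (t\<^sup>2)" and ip_y: "ip (eip y y \<xi>) \<xi> = of_real (s\<^sup>2)"
    using \<xi> by (simp_all add: ex ey form_scale_left form_diag)
  have lcnj: "l * cnj l = 1" using l complex_norm_square[of l] by simp
  have "state_ip \<xi> (esm (of_real s) (act (eip x x) x) + esm (- l) (esm (of_real t) (act (eip y x) x))) x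
      = of_real (s * t ^ 4) - (l * cnj l) * of_real (s * t ^ 4)"
    by (simp add: S.form_add_left S.form_scale_left state_ip_act_eigen[OF ex] eip_compact
        ip_x ip_yx power2_eq_square power4_eq_xxxx mult_ac)
  moreover have "state_ip \<xi> (esm (of_real t) (act (eip y y) y) + esm (- l) (esm (of_real s) (act (eip y x) y))) y
      = of_real (t * s ^ 4) - (l * cnj l) * of_real (t * s ^ 4)"
    by (simp add: S.form_add_left S.form_scale_left state_ip_act_eigen[OF ey] eip_compact
        ip_y ip_yx power2_eq_square power4_eq_xxxx mult_ac)
  ultimately show ?thesis
    using bj_orth_of_norming_state[OF \<xi>] xx yy l lcnj
    by (intro exI[of _ "- l"]) (simp add: t_def s_def)
qed

section \<open>Orthogonality implies norm-parallelism\<close>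

lemma mnorm_lower_bound_of_range_vector:
  assumes x: "mnorm ip eip x = 1" and range: "eip x x \<eta> = \<eta>"
  shows "(1 + s) * (hnorm ip \<eta>)\<^sup>2 - cmod (of_real (s * (hnorm ip \<eta>)\<^sup>2) + k * state_ip \<eta> y x)
    \<le> mnorm ip eip (x + esm (- k) y) * (hnorm ip \<eta>)\<^sup>2"
proof -
  interpret S: pos_herm_form esm "state_ip \<eta>" by (rule pos_herm_form_state_ip)
  define a where "a = (hnorm ip \<eta>)\<^sup>2"
  define u where "u = of_real (s * a) + k * state_ip \<eta> y x"
  have "state_ip \<eta> x x = of_real a"
    by (simp add: state_ip_def range form_diag a_def)
  then have "state_ip \<eta> (x + esm (- k) y) x = of_real a - k * state_ip \<eta> y x"
    by (simp add: S.form_add_left S.form_scale_left)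
  also have "\<dots> = of_real ((1 + s) * a) - u"
    by (simp add: u_def algebra_simps)
  finally have split: "state_ip \<eta> (x + esm (- k) y) x = of_real ((1 + s) * a) - u" .
  have "(1 + s) * a - cmod u \<le> cmod (complex_of_real ((1 + s) * a)) - cmod u"
    unfolding norm_of_real by simp
  also have "\<dots> \<le> cmod (state_ip \<eta> (x + esm (- k) y) x)"
    unfolding split by (rule norm_triangle_ineq2)
  also have "\<dots> \<le> hnorm (state_ip \<eta>) (x + esm (- k) y) * hnorm (state_ip \<eta>) x"
    by (rule S.cauchy_schwarz)
  also have "\<dots> \<le> (mnorm ip eip (x + esm (- k) y) * hnorm ip \<eta>) * (1 * hnorm ip \<eta>)"
    using hnorm_state_ip_le[of \<eta> x] hnorm_state_ip_le[of \<eta> "x + esm (- k) y"] x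
    by (intro mult_mono) (simp_all add: S.hnorm_nonneg mnorm_nonneg hnorm_nonneg)
  finally show ?thesis by (simp add: u_def a_def power2_eq_square mult_ac)
qed

lemma state_ip_witness:
  assumes idem: "\<And>u. eip x x (eip x x u) = eip x x u"
  shows "state_ip \<xi> (esm (of_real s) (act (eip x x) x) + esm k (act (eip y x) x)) x
    = of_real (s * (hnorm ip (eip x x \<xi>))\<^sup>2) + k * ip (eip y x (eip x x \<xi>)) \<xi>"
proof -
  interpret S: pos_herm_form esm "state_ip \<xi>" by (rule pos_herm_form_state_ip)
  show ?thesis
    using ip_idempotent[OF eip_adjoint idem, of \<xi>]
    by (simp add: S.form_add_left S.form_scale_left state_ip_act eip_compact idem)
qed

lemma Re_state_ip_witness_ge:
  assumes idem: "\<And>u. eip x x (eip x x u) = eip x x u" and x: "mnorm ip eip x = 1"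
    and k: "cmod k = 1" and s: "s \<ge> 0" and \<xi>: "hnorm ip \<xi> = 1"
  shows "- op_norm ip (eip y x)
    \<le> Re (state_ip \<xi> (esm (of_real s) (act (eip x x) x) + esm k (act (eip y x) x)) x)"
proof -
  define \<eta> where "\<eta> = eip x x \<xi>"
  have "hnorm ip (eip y x \<eta>) \<le> op_norm ip (eip y x) * hnorm ip \<xi>"
    using hnorm_op_le[OF eip_compact, of y x \<eta>] hnorm_eip_self_le[OF x, of \<xi>]
    by (simp add: \<eta>_def mult_left_mono op_norm_nonneg[OF eip_compact] order_trans)
  then have "cmod (k * ip (eip y x \<eta>) \<xi>) \<le> op_norm ip (eip y x)"
    using cauchy_schwarz[of "eip y x \<eta>" \<xi>] \<xi> k by (simp add: norm_mult)
  then have "- op_norm ip (eip y x) \<le> Re (k * ip (eip y x \<eta>) \<xi>)"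
    using abs_Re_le_cmod[of "k * ip (eip y x \<eta>) \<xi>"] by linarith
  moreover have "0 \<le> s * (hnorm ip \<eta>)\<^sup>2" using s by simp
  ultimately show ?thesis
    by (simp add: state_ip_witness[OF idem] \<eta>_def)
qed

text \<open>Birkhoff--James orthogonality \<open>x \<perp> w\<close>, tested with \<open>\<alpha> = -r\<close> at a vector state \<open>\<xi>\<close>
  norming \<open>x - r w\<close>: the range vector \<open>\<langle>x, x\<rangle> \<xi>\<close> is almost a unit vector.\<close>
lemma norming_state_defect:
  assumes idem: "\<And>u. eip x x (eip x x u) = eip x x u" and x: "mnorm ip eip x = 1"
    and k: "cmod k = 1" and s: "s \<ge> 0"
    and w: "w = esm (of_real s) (act (eip x x) x) + esm k (act (eip y x) x)"
    and \<xi>: "hnorm ip \<xi> = 1" and r: "r > 0"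
    and norming: "1 \<le> Re (state_ip \<xi> (x + esm (- of_real r) w) (x + esm (- of_real r) w))"
  defines "a \<equiv> (hnorm ip (eip x x \<xi>))\<^sup>2"
    and "E \<equiv> 2 * r * op_norm ip (eip y x) + r\<^sup>2 * (mnorm ip eip w)\<^sup>2"
  shows "1 - a \<le> E" and "Re (state_ip \<xi> w x) \<le> r * (mnorm ip eip w)\<^sup>2 / 2"
proof -
  interpret S: pos_herm_form esm "state_ip \<xi>" by (rule pos_herm_form_state_ip)
  define v where "v = state_ip \<xi> w x"
  have "Re (state_ip \<xi> x w) = Re v" using S.form_cnj_swap[of w x] by (simp add: v_def)
  moreover have "Re (state_ip \<xi> x x) = a"
    using ip_idempotent[OF eip_adjoint idem, of \<xi>] by (simp add: state_ip_def a_def)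
  ultimately have "Re (state_ip \<xi> (x + esm (- of_real r) w) (x + esm (- of_real r) w))
      = a - 2 * r * Re v + r\<^sup>2 * Re (state_ip \<xi> w w)"
    using S.Re_form_add_scale[of x "- of_real r" w] by simp
  moreover have "r\<^sup>2 * Re (state_ip \<xi> w w) \<le> r\<^sup>2 * (mnorm ip eip w)\<^sup>2"
    using Re_state_ip_le[of \<xi> w] \<xi> by (simp add: mult_left_mono)
  ultimately have main: "1 \<le> a - 2 * r * Re v + r\<^sup>2 * (mnorm ip eip w)\<^sup>2"
    using norming by linarith
  have "- (2 * r * op_norm ip (eip y x)) \<le> 2 * r * Re v"
    using mult_left_mono[OF Re_state_ip_witness_ge[OF idem x k s \<xi>], of "2 * r"] r
    by (simp add: v_def w)
  then show "1 - a \<le> E"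
    using main unfolding E_def by linarith
  have "a \<le> 1"
    using hnorm_eip_self_le[OF x, of \<xi>] \<xi> hnorm_nonneg[of "eip x x \<xi>"]
    by (simp add: a_def power_le_one)
  then have "r * (2 * Re v) \<le> r * (r * (mnorm ip eip w)\<^sup>2)"
    using main by (simp add: power2_eq_square mult_ac)
  then show "Re (state_ip \<xi> w x) \<le> r * (mnorm ip eip w)\<^sup>2 / 2"
    using r by (simp add: v_def)
qed

text \<open>The number \<open>u = s \<parallel>\<eta>\<parallel>\<^sup>2 + k \<langle>\<langle>y, x\<rangle> \<eta>, \<eta>\<rangle>\<close> lies in the closed disc of radius \<open>s \<parallel>\<eta>\<parallel>\<^sup>2\<close>
  about \<open>s \<parallel>\<eta>\<parallel>\<^sup>2\<close>, so it is small as soon as its real part is; and \<open>Re u\<close> is close to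
  \<open>Re \<omega>\<^sub>\<xi>(\<langle>w, x\<rangle>)\<close>.\<close>
lemma range_vector_disc_bound:
  fixes y :: 'e
  assumes idem: "\<And>u. eip x x (eip x x u) = eip x x u" and x: "mnorm ip eip x = 1"
    and k: "cmod k = 1" and \<xi>: "hnorm ip \<xi> = 1"
  defines "s \<equiv> mnorm ip eip y" and "\<eta> \<equiv> eip x x \<xi>"
  defines "a \<equiv> (hnorm ip \<eta>)\<^sup>2" and "w \<equiv> esm (of_real s) (act (eip x x) x) + esm k (act (eip y x) x)"
  shows "(cmod (of_real (s * a) + k * state_ip \<eta> y x))\<^sup>2
    \<le> 2 * (s * a) * (Re (state_ip \<xi> w x) + op_norm ip (eip y x) * sqrt (1 - a))"
proof -
  interpret R: pos_herm_form esm "state_ip \<eta>" by (rule pos_herm_form_state_ip)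
  define u where "u = of_real (s * a) + k * state_ip \<eta> y x"
  have s0: "s \<ge> 0" by (simp add: s_def mnorm_nonneg)
  have "(hnorm ip (\<eta> - \<xi>))\<^sup>2 = 1 - a"
    using ip_idempotent[OF eip_adjoint idem, of \<xi>] power2_hnorm[of \<xi>] \<xi>
    by (simp add: power2_hnorm Re_form_diff a_def \<eta>_def)
  then have dist: "hnorm ip (\<eta> - \<xi>) = sqrt (1 - a)"
    using hnorm_nonneg by (metis real_sqrt_unique)
  have "state_ip \<xi> w x = of_real (s * a) + k * ip (eip y x \<eta>) \<xi>"
    unfolding w_def state_ip_witness[OF idem] by (simp add: a_def \<eta>_def)
  then have "u - state_ip \<xi> w x = k * ip (eip y x \<eta>) (\<eta> - \<xi>)"
    by (simp add: u_def state_ip_def form_diff_right algebra_simps)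
  then have "cmod (u - state_ip \<xi> w x) \<le> hnorm ip (eip y x \<eta>) * hnorm ip (\<eta> - \<xi>)"
    using cauchy_schwarz k by (simp add: norm_mult)
  also have "\<dots> \<le> op_norm ip (eip y x) * hnorm ip (\<eta> - \<xi>)"
    using hnorm_op_le[OF eip_compact, of y x \<eta>] hnorm_eip_self_le[OF x, of \<xi>] \<xi>
    by (intro mult_right_mono hnorm_nonneg)
      (simp add: \<eta>_def mult_left_le op_norm_nonneg[OF eip_compact] order_trans)
  finally have Re_u: "Re u \<le> Re (state_ip \<xi> w x) + op_norm ip (eip y x) * sqrt (1 - a)"
    using complex_Re_le_cmod[of "u - state_ip \<xi> w x"] dist by simp
  have "cmod (state_ip \<eta> y x) \<le> hnorm (state_ip \<eta>) y * hnorm (state_ip \<eta>) x"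
    by (rule R.cauchy_schwarz)
  also have "\<dots> \<le> (s * hnorm ip \<eta>) * (1 * hnorm ip \<eta>)"
    using hnorm_state_ip_le[of \<eta> y] hnorm_state_ip_le[of \<eta> x] x s0
    by (intro mult_mono) (simp_all add: s_def R.hnorm_nonneg hnorm_nonneg)
  finally have "cmod (u - of_real (s * a)) \<le> s * a"
    using k by (simp add: u_def norm_mult a_def power2_eq_square)
  then have "(cmod u)\<^sup>2 \<le> 2 * (s * a) * Re u"
    by (rule power2_cmod_le_if_in_disc)
  also have "\<dots> \<le> 2 * (s * a) * (Re (state_ip \<xi> w x) + op_norm ip (eip y x) * sqrt (1 - a))"
    using Re_u s0 by (intro mult_left_mono) (simp_all add: a_def)
  finally show ?thesis by (simp add: u_def)
qed

lemma mnorm_lower_bound_at_scale: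
  assumes idem: "\<And>u. eip x x (eip x x u) = eip x x u" and x: "mnorm ip eip x = 1"
    and k: "cmod k = 1" and r: "r > 0"
    and bj: "bj_orth (mnorm ip eip) esm x w"
    and w: "w = esm (of_real (mnorm ip eip y)) (act (eip x x) x) + esm k (act (eip y x) x)"
  defines "s \<equiv> mnorm ip eip y" and "B \<equiv> op_norm ip (eip y x)" and "K \<equiv> (mnorm ip eip w)\<^sup>2"
  defines "E \<equiv> 2 * r * B + r\<^sup>2 * K"
  shows "(1 + s) * (1 - E) - sqrt (2 * s * (r * K / 2 + B * sqrt E)) \<le> mnorm ip eip (x + esm (- k) y)"
proof -
  let ?z = "x + esm (- k) y" and ?zr = "x + esm (- of_real r) w"
  have "1 \<le> mnorm ip eip ?zr"
    using bj x unfolding bj_orth_def by metis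
  then obtain \<xi> where \<xi>: "hnorm ip \<xi> = 1" and "Re (state_ip \<xi> ?zr ?zr) = (mnorm ip eip ?zr)\<^sup>2"
    using exists_norming_state by (metis less_le_trans zero_less_one)
  then have "1 \<le> Re (state_ip \<xi> ?zr ?zr)"
    using \<open>1 \<le> mnorm ip eip ?zr\<close> by (simp add: one_le_power)
  note defect = norming_state_defect[OF idem x k mnorm_nonneg w \<xi> r this,
      folded s_def B_def K_def, folded E_def]
  define \<eta> where "\<eta> = eip x x \<xi>"
  define a where "a = (hnorm ip \<eta>)\<^sup>2"
  define u where "u = of_real (s * a) + k * state_ip \<eta> y x"
  have a: "0 \<le> a" "a \<le> 1" "1 - E \<le> a"
    using hnorm_eip_self_le[OF x, of \<xi>] \<xi> hnorm_nonneg[of \<eta>] defect(1)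
    by (simp_all add: a_def \<eta>_def power_le_one)
  have "(cmod u)\<^sup>2 \<le> 2 * (s * a) * (Re (state_ip \<xi> w x) + B * sqrt (1 - a))"
    using range_vector_disc_bound[OF idem x k \<xi>]
    by (simp add: u_def a_def \<eta>_def B_def s_def w)
  also have "\<dots> \<le> 2 * (s * a) * (r * K / 2 + B * sqrt E)"
    using defect(2) a(3) mnorm_nonneg[of y] op_norm_nonneg[OF eip_compact, of y x] a(1)
    by (intro mult_left_mono add_mono) (simp_all add: K_def B_def s_def mult_left_mono)
  also have "\<dots> \<le> 2 * s * (r * K / 2 + B * sqrt E)"
    using a r by (intro mult_right_mono) (simp_all add: s_def B_def K_def E_def mult_left_le
        mnorm_nonneg op_norm_nonneg[OF eip_compact])
  finally have "cmod u \<le> sqrt (2 * s * (r * K / 2 + B * sqrt E))"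
    by (rule real_le_rsqrt)
  moreover have "(1 + s) * a - cmod u \<le> mnorm ip eip ?z * a"
    using mnorm_lower_bound_of_range_vector[OF x, of \<eta>] idem by (simp add: \<eta>_def a_def u_def)
  moreover have "mnorm ip eip ?z * a \<le> mnorm ip eip ?z"
    using a mnorm_nonneg[of ?z] by (simp add: mult_left_le)
  moreover have "(1 + s) * (1 - E) \<le> (1 + s) * a"
    using a mnorm_nonneg[of y] by (simp add: s_def)
  ultimately show ?thesis by linarith
qed

lemma bj_orth_imp_parallel:
  assumes idem: "\<And>u. eip x x (eip x x u) = eip x x u" and x: "mnorm ip eip x = 1"
    and k: "cmod k = 1"
    and bj: "bj_orth (mnorm ip eip) esm x
      (esm (of_real (mnorm ip eip y)) (act (eip x x) x) + esm k (act (eip y x) x))"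
  shows "mnorm ip eip (x + esm (- k) y) = mnorm ip eip x + mnorm ip eip y"
proof -
  define s where "s = mnorm ip eip y"
  define B where "B = op_norm ip (eip y x)"
  define K where "K = (mnorm ip eip (esm (of_real s) (act (eip x x) x) + esm k (act (eip y x) x)))\<^sup>2"
  define E where "E r = 2 * r * B + r\<^sup>2 * K" for r
  define bound where "bound r = (1 + s) * (1 - E r) - sqrt (2 * s * (r * K / 2 + B * sqrt (E r)))" for r
  let ?z = "x + esm (- k) y"
  have "1 + s \<le> mnorm ip eip ?z"
  proof (rule tendsto_upperbound)
    show "(bound \<longlongrightarrow> 1 + s) (at_right 0)"
      unfolding bound_def E_def by (rule tendsto_eq_intros refl | simp)+
    show "\<forall>\<^sub>F r in at_right 0. bound r \<le> mnorm ip eip ?z"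
      using eventually_at_right_less[of "0 :: real"]
    proof eventually_elim
      case (elim r)
      show ?case
        using mnorm_lower_bound_at_scale[OF idem x k elim bj refl]
        by (simp add: bound_def E_def s_def B_def K_def)
    qed
  qed simp
  moreover have "mnorm ip eip ?z \<le> 1 + s"
    using mnorm_add_scale_le[of x "- k" y] x k by (simp add: s_def)
  ultimately show ?thesis using x by (simp add: s_def)
qed

lemma bj_orth_imp_norm_parallel:
  assumes idem: "\<And>u. eip x x (eip x x u) = eip x x u" and k: "cmod k = 1"
    and bj: "bj_orth (mnorm ip eip) esm x
      (esm (of_real (mnorm ip eip y)) (act (eip x x) x) +
       esm k (esm (of_real (mnorm ip eip x)) (act (eip y x) x)))"
  shows "norm_parallel (mnorm ip eip) esm x y"
proof (cases "x = 0")
  case True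
  then show ?thesis by (auto simp: norm_parallel_def esm_one mnorm_eq_0_iff intro!: exI[of _ 1])
next
  case False
  then have x: "mnorm ip eip x = 1" by (rule mnorm_eq_1_of_idempotent[OF idem])
  then have "mnorm ip eip (x + esm (- k) y) = mnorm ip eip x + mnorm ip eip y"
    using bj_orth_imp_parallel[OF idem x k] bj by (simp add: esm_one)
  then show ?thesis using k unfolding norm_parallel_def by (intro exI[of _ "- k"]) simp
qed

end

theorem corollary2p3:
  fixes sm :: "complex \<Rightarrow> 'h::ab_group_add \<Rightarrow> 'h" and ip :: "'h \<Rightarrow> 'h \<Rightarrow> complex"
    and esm :: "complex \<Rightarrow> 'e::ab_group_add \<Rightarrow> 'e" and act :: "('h \<Rightarrow> 'h) \<Rightarrow> 'e \<Rightarrow> 'e"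
    and eip :: "'e \<Rightarrow> 'e \<Rightarrow> ('h \<Rightarrow> 'h)" and x y :: 'e
  assumes "hilbert_KH_module sm ip esm act eip"
    and "eip x x \<circ> eip x x = eip x x"
  shows "norm_parallel (mnorm ip eip) esm x y \<longleftrightarrow>
    (\<exists>l. cmod l = 1 \<and>
       bj_orth (mnorm ip eip) esm x
         (esm (complex_of_real (mnorm ip eip y)) (act (eip x x) x) +
          esm l (esm (complex_of_real (mnorm ip eip x)) (act (eip y x) x))) \<and>
       bj_orth (mnorm ip eip) esm y
         (esm (complex_of_real (mnorm ip eip x)) (act (eip y y) y) +
          esm l (esm (complex_of_real (mnorm ip eip y)) (act (eip y x) y))))"
proof -
  interpret hilbert_KH sm ip esm act eip by (rule hilbert_KH.intro) (rule assms(1))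
  have idem: "\<And>u. eip x x (eip x x u) = eip x x u" using assms(2) by (metis comp_apply)
  show ?thesis
    using parallel_imp_bj_orth bj_orth_imp_norm_parallel[OF idem]
    unfolding norm_parallel_def by blast
qed

end
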